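(* Let $\zeta>0$ and let $G=(\mathcal{Y},E,f)$ be a curl consistent weighted digraph. Then there exists a weighted digraph $G'=(\mathcal{Y}\cup\mathcal{Y}',E',f')$ with $\mathcal{Y}'\cap\mathcal{Y}=\emptyset$ and $E\cap E'=\emptyset$ such that (1) for every $e=(C^{(i)},C^{(j)})\in E$, the synthetic expert between $C^{(i)}$ and $C^{(j)}$ in $G'$ is $\zeta$-accurate and $f(e)$ lies in its bound interval $(L_{G'}(i,j),U_{G'}(i,j))$; and (2) $G'$ is curl consistent.
   Context: A weighted digraph $H=(V,E_H,h)$ has $E_H$ a set of ordered pairs of distinct vertices and $h:E_H\to\mathbb{R}$, extended by $h(b,a)=1-h(a,b)$; edges may be traversed in either direction with this convention. A cycle is a sequence of $\ell\ge3$ pairwise distinct vertices $(c_1,\dots,c_\ell)$ with consecutive pairs and $(c_\ell,c_1)$ edges (either direction); its curl is $h(c_\ell,c_1)+\sum_{t<\ell}h(c_t,c_{t+1})$. $H$ is curl consistent if every cycle of length $\ell$ has curl strictly between $1$ and $\ell-1$. A path is a sequence of pairwise distinct vertices with consecutive pairs edges; its weight $W(H,B)$ is the sum of $h$ over its consecutive pairs. For vertices $a,b$ with neither $(a,b)$ nor $(b,a)$ an edge of $H$, let $U_H(a,b)=\min W(H,B)$ over paths $B$ from $a$ to $b$ and $L_H(a,b)=1-\min W(H,\overline{B})$ over paths $\overline{B}$ from $b$ to $a$ (minimum over the empty set is $+\infty$); the synthetic expert between $a$ and $b$ is called $\zeta$-accurate if $U_H(a,b)-L_H(a,b)\le\zeta$,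 i.e. its bound interval is contained in $(L,L+\zeta]$ for some $L$. *)

theory Defs
  imports Complex_Main "HOL-Library.Extended_Real"
begin

definition wdigraph :: "'a set \<Rightarrow> ('a \<times> 'a) set \<Rightarrow> bool" where
  "wdigraph V E \<longleftrightarrow> finite V \<and> E \<subseteq> V \<times> V \<and>
     (\<forall>(a,b)\<in>E. a \<noteq> b \<and> (b,a) \<notin> E)"

definition adj :: "('a \<times> 'a) set \<Rightarrow> 'a \<Rightarrow> 'a \<Rightarrow> bool" where
  "adj E a b \<longleftrightarrow> (a,b) \<in> E \<or> (b,a) \<in> E"

definition hx :: "('a \<times> 'a) set \<Rightarrow> ('a \<Rightarrow> 'a \<Rightarrow> real) \<Rightarrow> 'a \<Rightarrow> 'a \<Rightarrow> real" where
  "hx E h a b = (if (a,b) \<in> E then h a b else 1 - h b a)"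

definition is_cycle :: "('a \<times> 'a) set \<Rightarrow> 'a list \<Rightarrow> bool" where
  "is_cycle E cs \<longleftrightarrow> length cs \<ge> 3 \<and> distinct cs \<and>
     (\<forall>i<length cs. adj E (cs!i) (cs!((i+1) mod length cs)))"

definition curl :: "('a \<times> 'a) set \<Rightarrow> ('a \<Rightarrow> 'a \<Rightarrow> real) \<Rightarrow> 'a list \<Rightarrow> real" where
  "curl E h cs = (\<Sum>i<length cs. hx E h (cs!i) (cs!((i+1) mod length cs)))"

definition curl_consistent :: "('a \<times> 'a) set \<Rightarrow> ('a \<Rightarrow> 'a \<Rightarrow> real) \<Rightarrow> bool" where
  "curl_consistent E h \<longleftrightarrow>
     (\<forall>cs. is_cycle E cs \<longrightarrow> 1 < curl E h cs \<and> curl E h cs < real (length cs) - 1)"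

definition is_path :: "('a \<times> 'a) set \<Rightarrow> 'a list \<Rightarrow> bool" where
  "is_path E xs \<longleftrightarrow> xs \<noteq> [] \<and> distinct xs \<and>
     (\<forall>i. i + 1 < length xs \<longrightarrow> adj E (xs!i) (xs!(i+1)))"

definition path_weight :: "('a \<times> 'a) set \<Rightarrow> ('a \<Rightarrow> 'a \<Rightarrow> real) \<Rightarrow> 'a list \<Rightarrow> real" where
  "path_weight E h xs = (\<Sum>i<length xs - 1. hx E h (xs!i) (xs!(i+1)))"

definition paths_between :: "('a \<times> 'a) set \<Rightarrow> 'a \<Rightarrow> 'a \<Rightarrow> 'a list set" where
  "paths_between E a b = {xs. is_path E xs \<and> hd xs = a \<and> last xs = b}"

text \<open>Upper and lower bounds of the synthetic expert (min over the empty set is +infinity).\<close>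

definition U_bound :: "('a \<times> 'a) set \<Rightarrow> ('a \<Rightarrow> 'a \<Rightarrow> real) \<Rightarrow> 'a \<Rightarrow> 'a \<Rightarrow> ereal" where
  "U_bound E h a b = (INF xs\<in>paths_between E a b. ereal (path_weight E h xs))"

definition L_bound :: "('a \<times> 'a) set \<Rightarrow> ('a \<Rightarrow> 'a \<Rightarrow> real) \<Rightarrow> 'a \<Rightarrow> 'a \<Rightarrow> ereal" where
  "L_bound E h a b = 1 - (INF xs\<in>paths_between E b a. ereal (path_weight E h xs))"

text \<open>The synthetic expert between a and b exists (no edge between a and b in either
  direction) and is zeta-accurate.\<close>

definition zeta_accurate :: "('a \<times> 'a) set \<Rightarrow> ('a \<Rightarrow> 'a \<Rightarrow> real) \<Rightarrow> real \<Rightarrow> 'a \<Rightarrow> 'a \<Rightarrow> bool" where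
  "zeta_accurate E h \<zeta> a b \<longleftrightarrow> \<not> adj E a b \<and> U_bound E h a b - L_bound E h a b \<le> ereal \<zeta>"

end

theory Submission
  imports Defs
begin

text \<open>Subdivide every edge (a, b) of G twice, by new vertices n_s (s = True, False) with edges
  a -> n_s -> b, giving a -> n_s the weight f a b + epsilon resp. f a b + 1 - epsilon and
  n_s -> b the weight 0. Then the path a, n_True, b has weight f a b + epsilon and the path
  b, n_False, a has weight 1 - f a b + epsilon, so the synthetic expert between a and b has the
  bounds f a b -+ epsilon. No path is cheaper: contracting a walk between original vertices to
  its original vertices gives a walk in G, and each detour through a new vertex costs the weight
  of the corresponding edge of G plus a slack in [epsilon, 1 - epsilon]; a path of G from a to b
  other than the edge itself closes with it to a cycle, whose curl exceeds 1. The same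
  contraction turns a cycle of length 2k of the subdivided graph into a cycle of G or, for k = 2,
  into one edge traversed both ways, and the slack keeps the curl inside (1, 2k - 1).\<close>

lemma path_weight_Nil [simp]: "path_weight E h [] = 0"
  and path_weight_singleton [simp]: "path_weight E h [x] = 0"
  by (simp_all add: path_weight_def)

lemma path_weight_Cons_Cons [simp]:
  "path_weight E h (x # y # zs) = hx E h x y + path_weight E h (y # zs)"
  by (simp add: path_weight_def sum.lessThan_Suc_shift del: sum.lessThan_Suc)

lemma path_weight_append:
  "xs \<noteq> [] \<Longrightarrow> ys \<noteq> [] \<Longrightarrow>
    path_weight E h (xs @ ys) = path_weight E h xs + hx E h (last xs) (hd ys) + path_weight E h ys"
  by (induction xs rule: induct_list012) (auto simp: neq_Nil_conv)

lemma is_path_iff: "is_path E xs \<longleftrightarrow> xs \<noteq> [] \<and> distinct xs \<and> successively (adj E) xs"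
  by (simp add: is_path_def successively_conv_nth)

lemma nth_snoc_hd_Suc:
  assumes "i < length cs"
  shows "(cs @ [hd cs]) ! Suc i = cs ! (Suc i mod length cs)"
proof (cases "Suc i < length cs")
  case False
  with assms have "Suc i = length cs" "cs \<noteq> []" by auto
  then show ?thesis by (simp add: hd_conv_nth)
qed (simp add: nth_append)

lemma is_cycle_iff:
  "is_cycle E cs \<longleftrightarrow> 3 \<le> length cs \<and> distinct cs \<and> successively (adj E) (cs @ [hd cs])"
  by (auto simp: is_cycle_def successively_conv_nth nth_snoc_hd_Suc nth_append_left)

lemma curl_eq_path_weight: "cs \<noteq> [] \<Longrightarrow> curl E h cs = path_weight E h (cs @ [hd cs])"
  unfolding curl_def path_weight_def by (auto simp: nth_snoc_hd_Suc nth_append_left intro: sum.cong)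

lemma is_cycle_rotate1: "is_cycle E cs \<Longrightarrow> is_cycle E (rotate1 cs)"
  by (cases cs) (auto simp: is_cycle_iff successively_append_iff successively_Cons hd_append)

lemma curl_rotate1: "curl E h (rotate1 cs) = curl E h cs"
proof (cases cs)
  case (Cons x r)
  show ?thesis
  proof (cases "r = []")
    case False
    have "curl E h (rotate1 cs) = path_weight E h ((r @ [x]) @ [hd r])"
      using False Cons by (simp add: curl_eq_path_weight del: append_assoc)
    also have "\<dots> = path_weight E h ([x] @ (r @ [x]))"
      using False by (simp add: path_weight_append del: append_assoc append_Cons)
    also have "\<dots> = curl E h cs"
      using Cons by (simp add: curl_eq_path_weight)
    finally show ?thesis .
  qed (simp add: Cons)
qed simp

lemma wdigraph_asym: "wdigraph V E \<Longrightarrow> asym E"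
  by (auto simp: wdigraph_def)

lemma wdigraph_finite_edges: "wdigraph V E \<Longrightarrow> finite E"
  unfolding wdigraph_def by (auto intro: finite_subset[of E "V \<times> V"])

lemma hx_add_hx_swap: "asym E \<Longrightarrow> adj E x y \<Longrightarrow> hx E h x y + hx E h y x = 1"
  by (auto simp: adj_def hx_def dest: asymD)

definition lefts :: "('a + 'b) list \<Rightarrow> 'a list" where
  "lefts xs = map projl (filter isl xs)"

lemma lefts_simps [simp]:
  "lefts [] = []" "lefts (Inl a # xs) = a # lefts xs" "lefts (Inr n # xs) = lefts xs"
  "lefts (xs @ ys) = lefts xs @ lefts ys"
  by (simp_all add: lefts_def)

lemma set_lefts: "set (lefts xs) = {a. Inl a \<in> set xs}"
  by (force simp: lefts_def isl_def)

lemma distinct_lefts: "distinct xs \<Longrightarrow> distinct (lefts xs)"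
proof (induction xs)
  case (Cons x xs)
  then show ?case by (cases x) (auto simp: set_lefts)
qed simp

lemma hd_lefts: "xs \<noteq> [] \<Longrightarrow> hd xs = Inl a \<Longrightarrow> hd (lefts xs) = a"
  by (cases xs) auto

lemma last_lefts: "xs \<noteq> [] \<Longrightarrow> last xs = Inl a \<Longrightarrow> last (lefts xs) = a"
  by (cases xs rule: rev_exhaust) auto

fun no_backtracking :: "'a list \<Rightarrow> bool" where
  "no_backtracking (x # y # z # zs) \<longleftrightarrow> x \<noteq> z \<and> no_backtracking (y # z # zs)"
| "no_backtracking _ \<longleftrightarrow> True"

lemma distinct_no_backtracking: "distinct xs \<Longrightarrow> no_backtracking xs"
  by (induction xs rule: no_backtracking.induct) auto

lemma no_backtracking_ConsD: "no_backtracking (x # xs) \<Longrightarrow> no_backtracking xs"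
  by (cases "x # xs" rule: no_backtracking.cases) auto

lemma no_backtracking_snoc:
  "no_backtracking (xs @ [y]) \<longleftrightarrow> no_backtracking xs \<and> (2 \<le> length xs \<longrightarrow> xs ! (length xs - 2) \<noteq> y)"
  by (induction xs rule: no_backtracking.induct) auto

lemma no_backtracking_cycle:
  assumes "distinct cs" "3 \<le> length cs"
  shows "no_backtracking (cs @ [hd cs])"
proof -
  have "cs ! (length cs - 2) \<noteq> cs ! 0"
    using assms by (subst nth_eq_iff_index_eq) auto
  moreover have "cs \<noteq> []"
    using assms by auto
  ultimately show ?thesis
    using assms by (simp add: no_backtracking_snoc distinct_no_backtracking hd_conv_nth)
qed

locale edge_subdivision =
  fixes V :: "'a set" and E :: "('a \<times> 'a) set" and f :: "'a \<Rightarrow> 'a \<Rightarrow> real"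
    and \<epsilon> :: real and node :: "('a \<times> 'a) \<times> bool \<Rightarrow> 'b"
  assumes graph: "wdigraph V E"
    and consistent: "curl_consistent E f"
    and eps_pos: "0 < \<epsilon>" and eps_le_half: "\<epsilon> \<le> 1/2"
    and inj_node: "inj_on node (E \<times> UNIV)"
begin

definition sub_edges :: "('a + 'b) rel" where
  "sub_edges = {(Inl a, Inr (node ((a, b), s))) | a b s. (a, b) \<in> E}
             \<union> {(Inr (node ((a, b), s)), Inl b) | a b s. (a, b) \<in> E}"

definition sub_weight :: "'a + 'b \<Rightarrow> 'a + 'b \<Rightarrow> real" where
  "sub_weight x y = (case (x, y) of
      (Inl _, Inr n) \<Rightarrow> (case inv_into (E \<times> UNIV) node n of
                          ((a, b), s) \<Rightarrow> f a b + (if s then \<epsilon> else 1 - \<epsilon>))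
    | _ \<Rightarrow> 0)"

abbreviation "adj' \<equiv> adj sub_edges"
abbreviation "hx' \<equiv> hx sub_edges sub_weight"

lemma asym_E: "asym E"
  using graph by (rule wdigraph_asym)

lemma node_eq_iff: "e \<in> E \<Longrightarrow> e' \<in> E \<Longrightarrow> node (e, s) = node (e', s') \<longleftrightarrow> e = e' \<and> s = s'"
  using inj_node by (auto dest: inj_onD)

lemma Inl_Inr_sub_edge_iff:
    "(Inl a, Inr n) \<in> sub_edges \<longleftrightarrow> (\<exists>b s. (a, b) \<in> E \<and> n = node ((a, b), s))"
  and Inr_Inl_sub_edge_iff:
    "(Inr n, Inl b) \<in> sub_edges \<longleftrightarrow> (\<exists>a s. (a, b) \<in> E \<and> n = node ((a, b), s))"
  and Inl_Inl_notin_sub_edges: "(Inl a, Inl a') \<notin> sub_edges"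
  and Inr_Inr_notin_sub_edges: "(Inr n, Inr n') \<notin> sub_edges"
  by (auto simp: sub_edges_def)

lemma sub_weight_node:
  "(a, b) \<in> E \<Longrightarrow> sub_weight (Inl c) (Inr (node ((a, b), s))) = f a b + (if s then \<epsilon> else 1 - \<epsilon>)"
  using inv_into_f_f[OF inj_node, of "((a, b), s)"] by (simp add: sub_weight_def)

lemma sub_weight_Inr: "sub_weight (Inr n) y = 0"
  by (simp add: sub_weight_def)

lemma adj_Inr_node:
  assumes "adj' x (Inr n)"
  obtains a b s where "(a, b) \<in> E" "n = node ((a, b), s)"
  using assms by (cases x) (auto simp: adj_def sub_edges_def)

lemma adj_node_iff:
  assumes "(a, b) \<in> E"
  shows "adj' x (Inr (node ((a, b), s))) \<longleftrightarrow> x = Inl a \<or> x = Inl b"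
  using assms by (cases x) (auto simp: adj_def sub_edges_def node_eq_iff)

lemma detour_weight:
  fixes s :: bool
  assumes ab: "(a, b) \<in> E"
  defines "n \<equiv> node ((a, b), s)" and "c \<equiv> if s then \<epsilon> else 1 - \<epsilon>"
  shows "hx' (Inl a) (Inr n) + hx' (Inr n) (Inl b) = hx E f a b + c"
    and "hx' (Inl b) (Inr n) + hx' (Inr n) (Inl a) = hx E f b a + (1 - c)"
proof -
  have "a \<noteq> b" "(b, a) \<notin> E"
    using asym_E ab by (auto dest: asymD)
  then have "(Inl b, Inr n) \<notin> sub_edges" "(Inr n, Inl a) \<notin> sub_edges"
    using ab by (auto simp: n_def Inl_Inr_sub_edge_iff Inr_Inl_sub_edge_iff node_eq_iff)
  moreover have "(Inl a, Inr n) \<in> sub_edges" "(Inr n, Inl b) \<in> sub_edges"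
    using ab by (auto simp: n_def Inl_Inr_sub_edge_iff Inr_Inl_sub_edge_iff)
  ultimately show "hx' (Inl a) (Inr n) + hx' (Inr n) (Inl b) = hx E f a b + c"
    and "hx' (Inl b) (Inr n) + hx' (Inr n) (Inl a) = hx E f b a + (1 - c)"
    using ab \<open>(b, a) \<notin> E\<close>
    by (simp_all add: hx_def n_def c_def sub_weight_node sub_weight_Inr)
qed

lemma detour_bounds:
  assumes "adj' (Inl a) (Inr n)" "adj' (Inr n) z" "z \<noteq> Inl a"
  obtains b where "z = Inl b" "adj E a b"
    "hx E f a b + \<epsilon> \<le> hx' (Inl a) (Inr n) + hx' (Inr n) z"
    "hx' (Inl a) (Inr n) + hx' (Inr n) z \<le> hx E f a b + (1 - \<epsilon>)"
proof -
  obtain u v s where uv: "(u, v) \<in> E" and n: "n = node ((u, v), s)"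
    using assms(1) by (rule adj_Inr_node)
  have "adj' z (Inr n)"
    using assms(2) by (auto simp: adj_def)
  with assms(1,3) uv n have "a = u \<and> z = Inl v \<or> a = v \<and> z = Inl u"
    by (auto simp: adj_node_iff)
  moreover have "adj E u v" "adj E v u"
    using uv by (auto simp: adj_def)
  moreover have "\<epsilon> \<le> (if s then \<epsilon> else 1 - \<epsilon>)" "(if s then \<epsilon> else 1 - \<epsilon>) \<le> 1 - \<epsilon>"
    using eps_le_half by auto
  ultimately show ?thesis
    using that detour_weight[OF uv, of s] n by (elim disjE) auto
qed

lemma contract_walk:
  assumes "successively adj' xs" "no_backtracking xs" "xs \<noteq> []" "isl (hd xs)" "isl (last xs)"
  shows "length xs = 2 * length (lefts xs) - 1 \<and> successively (adj E) (lefts xs) \<and>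
    path_weight E f (lefts xs) + \<epsilon> * (length (lefts xs) - 1) \<le> path_weight sub_edges sub_weight xs \<and>
    path_weight sub_edges sub_weight xs \<le> path_weight E f (lefts xs) + (1 - \<epsilon>) * (length (lefts xs) - 1)"
  using assms
proof (induction xs rule: length_induct)
  case (1 xs)
  then obtain a ys where xs: "xs = Inl a # ys"
    by (cases xs) (auto simp: isl_def)
  show ?case
  proof (cases ys)
    case (Cons y zs)
    then obtain n where y: "y = Inr n"
      using "1.prems"(1) xs by (cases y) (auto simp: adj_def Inl_Inl_notin_sub_edges)
    then obtain z ws where zs: "zs = z # ws"
      using "1.prems"(5) xs Cons by (cases zs) auto
    have walk: "adj' (Inl a) (Inr n)" "adj' (Inr n) z" "successively adj' (z # ws)"
      using "1.prems"(1) xs Cons y zs by auto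
    have "z \<noteq> Inl a"
      using "1.prems"(2) xs Cons zs by auto
    with walk(1,2) obtain b where z: "z = Inl b" and "adj E a b" and detour:
        "hx E f a b + \<epsilon> \<le> hx' (Inl a) (Inr n) + hx' (Inr n) z"
        "hx' (Inl a) (Inr n) + hx' (Inr n) z \<le> hx E f a b + (1 - \<epsilon>)"
      by (rule detour_bounds)
    have "length (z # ws) < length xs" "no_backtracking (z # ws)" "isl (last (z # ws))"
      using "1.prems"(2,5) xs Cons zs by (auto dest: no_backtracking_ConsD)
    note IH = "1.IH"[rule_format, OF this(1) walk(3) this(2) _ _ this(3)]
    show ?thesis
      using IH detour \<open>adj E a b\<close> xs Cons y zs z by (simp add: algebra_simps)
  qed (simp add: xs)
qed

lemma contract_cycle:
  assumes cycle: "is_cycle sub_edges cs" and a: "hd cs = Inl a"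
  defines "ds \<equiv> lefts cs"
  shows "length cs = 2 * length ds \<and> successively (adj E) (ds @ [hd ds]) \<and>
    curl E f ds + \<epsilon> * length ds \<le> curl sub_edges sub_weight cs \<and>
    curl sub_edges sub_weight cs \<le> curl E f ds + (1 - \<epsilon>) * length ds"
proof -
  have len: "3 \<le> length cs" and "distinct cs" and walk: "successively adj' (cs @ [hd cs])"
    using cycle by (auto simp: is_cycle_iff)
  then have "cs \<noteq> []" by auto
  have "hd ds = a"
    using hd_lefts[OF \<open>cs \<noteq> []\<close> a] by (simp add: ds_def)
  then have lefts_closed: "lefts (cs @ [hd cs]) = ds @ [hd ds]"
    using a by (simp add: ds_def)
  have "isl (hd (cs @ [hd cs]))" "isl (last (cs @ [hd cs]))"
    using a \<open>cs \<noteq> []\<close> by auto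
  from contract_walk[OF walk no_backtracking_cycle[OF \<open>distinct cs\<close> len] _ this, unfolded lefts_closed]
  have "length cs = 2 * length ds" and "successively (adj E) (ds @ [hd ds])"
    and "path_weight E f (ds @ [hd ds]) + \<epsilon> * length ds \<le> path_weight sub_edges sub_weight (cs @ [hd cs])"
    and "path_weight sub_edges sub_weight (cs @ [hd cs]) \<le> path_weight E f (ds @ [hd ds]) + (1 - \<epsilon>) * length ds"
    by auto
  moreover have "ds \<noteq> []"
    using \<open>length cs = 2 * length ds\<close> len by auto
  ultimately show ?thesis
    using \<open>cs \<noteq> []\<close> by (simp add: curl_eq_path_weight)
qed

lemma curl_bounds_Inl_cycle:
  assumes cycle: "is_cycle sub_edges cs" and "isl (hd cs)"
  shows "1 < curl sub_edges sub_weight cs \<and> curl sub_edges sub_weight cs < real (length cs) - 1"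
proof -
  obtain a where "hd cs = Inl a"
    using \<open>isl (hd cs)\<close> by (cases "hd cs") auto
  define ds where "ds = lefts cs"
  from contract_cycle[OF cycle \<open>hd cs = Inl a\<close>, folded ds_def]
  have len_cs: "length cs = 2 * length ds" and ds_walk: "successively (adj E) (ds @ [hd ds])"
    and lower: "curl E f ds + \<epsilon> * length ds \<le> curl sub_edges sub_weight cs"
    and upper: "curl sub_edges sub_weight cs \<le> curl E f ds + (1 - \<epsilon>) * length ds"
    by auto
  have "2 \<le> length ds"
    using len_cs cycle by (simp add: is_cycle_iff)
  show ?thesis
  proof (cases "length ds = 2")
    case True
    then obtain p q where "ds = [p, q]"
      by (cases ds rule: remdups_adj.cases) auto
    with ds_walk have "curl E f ds = 1"
      using hx_add_hx_swap[OF asym_E] by (simp add: curl_eq_path_weight)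
    with lower upper True len_cs eps_pos show ?thesis by simp
  next
    case False
    have "distinct ds"
      using cycle by (simp add: ds_def is_cycle_iff distinct_lefts)
    with False \<open>2 \<le> length ds\<close> ds_walk have "is_cycle E ds"
      by (simp add: is_cycle_iff)
    then have "1 < curl E f ds" "curl E f ds < real (length ds) - 1"
      using consistent by (auto simp: curl_consistent_def)
    moreover have "0 \<le> \<epsilon> * length ds" "(1 - \<epsilon>) * length ds = length ds - \<epsilon> * length ds"
      using eps_pos by (simp_all add: algebra_simps)
    ultimately show ?thesis
      using lower upper len_cs by linarith
  qed
qed

lemma curl_consistent_sub: "curl_consistent sub_edges sub_weight"
  unfolding curl_consistent_def
proof (intro allI impI)
  fix cs
  assume cycle: "is_cycle sub_edges cs"
  show "1 < curl sub_edges sub_weight cs \<and> curl sub_edges sub_weight cs < real (length cs) - 1"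
  proof (cases "isl (hd cs)")
    case False
    from cycle have "3 \<le> length cs" "successively adj' (cs @ [hd cs])"
      by (auto simp: is_cycle_iff)
    then obtain x y r where cs: "cs = x # y # r" and "adj' x y"
      by (cases cs rule: remdups_adj.cases) auto
    with False have "isl y"
      by (cases x; cases y) (auto simp: adj_def Inr_Inr_notin_sub_edges)
    then have "isl (hd (rotate1 cs))"
      using cs by simp
    from curl_bounds_Inl_cycle[OF is_cycle_rotate1[OF cycle] this] show ?thesis
      by (simp add: curl_rotate1)
  qed (use cycle curl_bounds_Inl_cycle in blast)
qed

lemma path_weight_sub_lower:
  assumes "adj E a b" and path: "xs \<in> paths_between sub_edges (Inl a) (Inl b)"
  shows "hx E f a b + \<epsilon> \<le> path_weight sub_edges sub_weight xs"
proof -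
  have "xs \<noteq> []" and "distinct xs" and walk: "successively adj' xs"
    and hd_xs: "hd xs = Inl a" and last_xs: "last xs = Inl b"
    using path by (auto simp: paths_between_def is_path_iff)
  define ds where "ds = lefts xs"
  from contract_walk[OF walk distinct_no_backtracking[OF \<open>distinct xs\<close>] \<open>xs \<noteq> []\<close>] hd_xs last_xs
  have ds_walk: "successively (adj E) ds"
    and lower: "path_weight E f ds + \<epsilon> * (length ds - 1) \<le> path_weight sub_edges sub_weight xs"
    by (simp_all add: ds_def)
  have hd_ds: "hd ds = a" and last_ds: "last ds = b"
    using hd_lefts[OF \<open>xs \<noteq> []\<close> hd_xs] last_lefts[OF \<open>xs \<noteq> []\<close> last_xs] by (simp_all add: ds_def)
  have "ds \<noteq> []"
    using \<open>xs \<noteq> []\<close> hd_xs by (cases xs) (auto simp: ds_def)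
  moreover have "a \<noteq> b"
    using \<open>adj E a b\<close> asym_E by (auto simp: adj_def dest: asymD)
  ultimately have "2 \<le> length ds"
    using hd_ds last_ds by (cases ds rule: remdups_adj.cases) auto
  show ?thesis
  proof (cases "length ds = 2")
    case True
    then have "ds = [a, b]"
      using hd_ds last_ds by (cases ds rule: remdups_adj.cases) auto
    with lower show ?thesis by simp
  next
    case False
    have "distinct ds"
      using distinct_lefts[OF \<open>distinct xs\<close>] by (simp add: ds_def)
    moreover have "successively (adj E) (ds @ [hd ds])"
      using ds_walk \<open>adj E a b\<close> hd_ds last_ds \<open>2 \<le> length ds\<close>
      by (auto simp: successively_append_iff adj_def)
    ultimately have "is_cycle E ds"
      using False \<open>2 \<le> length ds\<close> by (simp add: is_cycle_iff)
    then have "1 < curl E f ds"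
      using consistent by (auto simp: curl_consistent_def)
    moreover have "curl E f ds = path_weight E f ds + hx E f b a"
      using \<open>ds \<noteq> []\<close> hd_ds last_ds by (simp add: curl_eq_path_weight path_weight_append)
    moreover have "hx E f a b + hx E f b a = 1"
      using hx_add_hx_swap[OF asym_E \<open>adj E a b\<close>] .
    moreover have "\<epsilon> \<le> \<epsilon> * (length ds - 1)"
      using eps_pos \<open>2 \<le> length ds\<close> by simp
    ultimately show ?thesis
      using lower by linarith
  qed
qed

lemma INF_path_weight_sub:
  assumes "adj E a b"
  shows "(INF xs\<in>paths_between sub_edges (Inl a) (Inl b). ereal (path_weight sub_edges sub_weight xs))
    = ereal (hx E f a b + \<epsilon>)"
proof -
  obtain n where detour: "[Inl a, Inr n, Inl b] \<in> paths_between sub_edges (Inl a) (Inl b)"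
    "path_weight sub_edges sub_weight [Inl a, Inr n, Inl b] = hx E f a b + \<epsilon>"
  proof (cases "(a, b) \<in> E")
    case True
    then have "adj' (Inl a) (Inr (node ((a, b), True)))" "adj' (Inr (node ((a, b), True))) (Inl b)"
      by (auto simp: adj_def Inl_Inr_sub_edge_iff Inr_Inl_sub_edge_iff)
    with True show ?thesis
      using that detour_weight(1)[OF True, of True] asym_E
      by (auto simp: paths_between_def is_path_iff dest: asymD)
  next
    case False
    with assms have ba: "(b, a) \<in> E" by (simp add: adj_def)
    then have "adj' (Inl a) (Inr (node ((b, a), False)))" "adj' (Inr (node ((b, a), False))) (Inl b)"
      by (auto simp: adj_def Inl_Inr_sub_edge_iff Inr_Inl_sub_edge_iff)
    with ba show ?thesis
      using that detour_weight(2)[OF ba, of False] asym_E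
      by (auto simp: paths_between_def is_path_iff dest: asymD)
  qed
  have "ereal (hx E f a b + \<epsilon>)
      \<in> (\<lambda>xs. ereal (path_weight sub_edges sub_weight xs)) ` paths_between sub_edges (Inl a) (Inl b)"
    using detour by (metis image_eqI)
  then show ?thesis
    by (rule cInf_eq_minimum) (auto dest: path_weight_sub_lower[OF assms])
qed

lemma U_bound_sub: "(a, b) \<in> E \<Longrightarrow> U_bound sub_edges sub_weight (Inl a) (Inl b) = ereal (f a b + \<epsilon>)"
  using INF_path_weight_sub[of a b] by (simp add: U_bound_def adj_def hx_def)

lemma L_bound_sub:
  assumes "(a, b) \<in> E"
  shows "L_bound sub_edges sub_weight (Inl a) (Inl b) = ereal (f a b - \<epsilon>)"
  using assms INF_path_weight_sub[of b a] asymD[OF asym_E assms]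
  by (simp add: L_bound_def adj_def hx_def one_ereal_def)

lemma wdigraph_sub: "wdigraph (Inl ` V \<union> Inr ` node ` (E \<times> UNIV)) sub_edges"
proof -
  have "finite V" "E \<subseteq> V \<times> V"
    using graph by (auto simp: wdigraph_def)
  have "finite (E \<times> (UNIV :: bool set))"
    using wdigraph_finite_edges[OF graph] by simp
  moreover have "sub_edges \<subseteq> (Inl ` V \<union> Inr ` node ` (E \<times> UNIV)) \<times> (Inl ` V \<union> Inr ` node ` (E \<times> UNIV))"
    using \<open>E \<subseteq> V \<times> V\<close> by (auto simp: sub_edges_def)
  moreover have "(v, u) \<notin> sub_edges" if "(u, v) \<in> sub_edges" for u v
    using that asym_E by (auto simp: sub_edges_def node_eq_iff dest: asymD)
  moreover have "u \<noteq> v" if "(u, v) \<in> sub_edges" for u v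
    using that by (auto simp: sub_edges_def)
  ultimately show ?thesis
    using \<open>finite V\<close> by (auto simp: wdigraph_def)
qed

end

theorem lemma4:
  fixes Y :: "'a set" and E :: "('a \<times> 'a) set" and f :: "'a \<Rightarrow> 'a \<Rightarrow> real" and \<zeta> :: real
  assumes "\<zeta> > 0" and "wdigraph Y E" and "curl_consistent E f"
  shows "\<exists>(Y' :: ('a + nat) set) E' f'.
           Y' \<inter> Inl ` Y = {} \<and>
           wdigraph (Inl ` Y \<union> Y') E' \<and>
           (\<lambda>(a,b). (Inl a, Inl b)) ` E \<inter> E' = {} \<and>
           (\<forall>(a,b)\<in>E. zeta_accurate E' f' \<zeta> (Inl a) (Inl b) \<and>
                L_bound E' f' (Inl a) (Inl b) < ereal (f a b) \<and>
                ereal (f a b) < U_bound E' f' (Inl a) (Inl b)) \<and>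
           curl_consistent E' f'"
proof -
  have "finite (E \<times> (UNIV :: bool set))"
    using wdigraph_finite_edges[OF assms(2)] by simp
  from finite_imp_inj_to_nat_seg[OF this]
  obtain node :: "('a \<times> 'a) \<times> bool \<Rightarrow> nat" where "inj_on node (E \<times> UNIV)"
    by blast
  define \<epsilon> where "\<epsilon> = min (\<zeta> / 2) (1 / 2)"
  have "0 < \<epsilon>" "\<epsilon> \<le> 1 / 2" "2 * \<epsilon> \<le> \<zeta>"
    using assms(1) by (simp_all add: \<epsilon>_def)
  interpret edge_subdivision Y E f \<epsilon> node
    by unfold_locales fact+
  have "zeta_accurate sub_edges sub_weight \<zeta> (Inl a) (Inl b) \<and>
      L_bound sub_edges sub_weight (Inl a) (Inl b) < ereal (f a b) \<and>
      ereal (f a b) < U_bound sub_edges sub_weight (Inl a) (Inl b)" if "(a, b) \<in> E" for a b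
    using U_bound_sub[OF that] L_bound_sub[OF that] \<open>0 < \<epsilon>\<close> \<open>2 * \<epsilon> \<le> \<zeta>\<close>
    by (simp add: zeta_accurate_def adj_def Inl_Inl_notin_sub_edges)
  moreover have "(\<lambda>(a, b). (Inl a, Inl b)) ` E \<inter> sub_edges = {}"
    using Inl_Inl_notin_sub_edges by auto
  moreover have "Inr ` node ` (E \<times> UNIV) \<inter> Inl ` Y = {}"
    by blast
  ultimately show ?thesis
    using wdigraph_sub curl_consistent_sub by blast
qed

end
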